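(* Let $n_1,n_2,n_3\in\mathbb{N}$, let $\sigma$ be a segment label map on $G=\{1,\dots,n_1\}\times\{1,\dots,n_2\}\times\{1,\dots,n_3\}$, fix any decomposition of $T$ into blocks, let $\tau=\mathrm{LABEL}(\sigma,T)$ and let $\tau'$ be the output of the block-wise method. Then for all 1-cells $t_1\in T$: $\tau(t_1)=0\Leftrightarrow\tau'(t_1)=0$.
   Context: Voxel grid and segmentation: $G=\{1,\dots,n_1\}\times\{1,\dots,n_2\}\times\{1,\dots,n_3\}$; voxels $v,w$ are adjacent iff $\sum_i|v_i-w_i|=1$. A segment label map is $\sigma:G\to\mathbb{N}=\{1,2,\dots\}$ such that each level set $\sigma^{-1}(l)$ is connected w.r.t. this adjacency. Topological grid: $T=\{1,\dots,2n_1-1\}\times\{1,\dots,2n_2-1\}\times\{1,\dots,2n_3-1\}$; a cell with exactly $j$ odd coordinates is a $j$-cell. Voxel $r$ corresponds to the 3-cell $2r-1$. Two cells are 6-neighbors if they differ by $1$ in exactly one coordinate. For a $j$-cell $t$, $\Gamma(t)$ is the set of 6-neighbors of $t$ in $T$ that are $(j+1)$-cells. Cells $t_1,t_2$ are connected, $t_1\leftrightarrow t_2$, iff there is $t\in T$ with $t_1,t_2\in\Gamma(t)$. Procedure LABEL: for a voxel box $\prod_i\{a_i,\dots,b_i\}\subseteq G$ let $B=\prod_i\{2a_i-1,\dots,2b_i-1\}$ be its cell box. $\mathrm{LABEL}(\sigma,B)$ produces $\lambda:B\to\mathbb{N}_0$: (1) $\lambda(2r-1)=\sigma(r)$ for 3-cells.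 (2) For $j=2,1,0$ in this order: for each $j$-cell $t\in B$ let $\theta(t)$ be the set of positive integers occurring exactly once in $(\lambda(s))_{s\in\Gamma(t)}$; $t$ is active iff $\theta(t)\ne\emptyset$, inactive $j$-cells get label $0$; the active $j$-cells of $B$ are partitioned into maximal sets of cells with equal $\theta$ that are connected by $\leftrightarrow$-paths inside the set; these classes are numbered $1,\dots,m_j(B)$ arbitrarily and each active $j$-cell gets its class number. Reference labeling: $\tau=\mathrm{LABEL}(\sigma,T)$. Block-wise method: for each axis $i$ choose odd integers $1=a^i_0<\dots<a^i_{m_i}=2n_i-1$; blocks are the boxes $\prod_i\{a^i_{k_i-1},\dots,a^i_{k_i}\}$. Step 1: $\lambda_B=\mathrm{LABEL}(\sigma,B)$ for each block. Step 2: with blocks ordered $B_1,\dots,B_K$, add offset $\sum_{k'<k}m_j(B_{k'})$ to each positive $j$-cell label of $\lambda_{B_k}$ ($j\in\{0,1,2\}$). Step 3: for $j\in\{1,2\}$, via union–find, unite the labels received in different blocks by any active $j$-cell lying in several blocks, and replace every positive $j$-cell label by its set representative. Step 4: for each 0-cell $t_0$ and each pair of distinct 1-cell labels occurring exactly once among the current labels of $\Gamma(t_0)$, merge the two labels if the corresponding 1-cells bound the same set of current 2-cell labels; if any merge took place at $t_0$, recompute the activity of $t_0$ and set its label to $0$ if inactive. The result is $\tau':T\to\mathbb{N}_0$. *)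

theory Defs
  imports Main
begin

type_synonym cell = "nat \<times> nat \<times> nat"

definition vgrid :: "nat \<Rightarrow> nat \<Rightarrow> nat \<Rightarrow> cell set" where
  "vgrid n1 n2 n3 = {1..n1} \<times> {1..n2} \<times> {1..n3}"

fun vadj :: "cell \<Rightarrow> cell \<Rightarrow> bool" where
  "vadj (x,y,z) (x',y',z') =
     (\<bar>int x - int x'\<bar> + \<bar>int y - int y'\<bar> + \<bar>int z - int z'\<bar> = 1)"

definition segment_map :: "nat \<Rightarrow> nat \<Rightarrow> nat \<Rightarrow> (cell \<Rightarrow> nat) \<Rightarrow> bool" where
  "segment_map n1 n2 n3 \<sigma> \<longleftrightarrow>
     (\<forall>v\<in>vgrid n1 n2 n3. \<sigma> v \<ge> 1) \<and>
     (\<forall>v\<in>vgrid n1 n2 n3. \<forall>w\<in>vgrid n1 n2 n3. \<sigma> v = \<sigma> w \<longrightarrow>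
        (\<lambda>a b. a \<in> vgrid n1 n2 n3 \<and> b \<in> vgrid n1 n2 n3 \<and> \<sigma> a = \<sigma> v \<and> \<sigma> b = \<sigma> v
               \<and> vadj a b)\<^sup>*\<^sup>* v w)"

definition tgrid :: "nat \<Rightarrow> nat \<Rightarrow> nat \<Rightarrow> cell set" where
  "tgrid n1 n2 n3 = {1..2*n1-1} \<times> {1..2*n2-1} \<times> {1..2*n3-1}"

fun cdim :: "cell \<Rightarrow> nat" where
  "cdim (x,y,z) = (if odd x then 1 else 0) + (if odd y then 1 else 0) + (if odd z then 1 else 0)"

text \<open>voxel r corresponds to the 3-cell 2r-1; inverse map\<close>
fun voxel_of :: "cell \<Rightarrow> cell" where
  "voxel_of (x,y,z) = ((x+1) div 2, (y+1) div 2, (z+1) div 2)"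

fun nbr6 :: "cell \<Rightarrow> cell \<Rightarrow> bool" where
  "nbr6 (x,y,z) (x',y',z') =
     ((\<bar>int x - int x'\<bar> = 1 \<and> y = y' \<and> z = z') \<or>
      (x = x' \<and> \<bar>int y - int y'\<bar> = 1 \<and> z = z') \<or>
      (x = x' \<and> y = y' \<and> \<bar>int z - int z'\<bar> = 1))"

definition Gam :: "nat \<Rightarrow> nat \<Rightarrow> nat \<Rightarrow> cell \<Rightarrow> cell set" where
  "Gam n1 n2 n3 t = {s \<in> tgrid n1 n2 n3. nbr6 t s \<and> cdim s = cdim t + 1}"

definition cconn :: "nat \<Rightarrow> nat \<Rightarrow> nat \<Rightarrow> cell \<Rightarrow> cell \<Rightarrow> bool" where
  "cconn n1 n2 n3 t1 t2 \<longleftrightarrow> (\<exists>t\<in>tgrid n1 n2 n3. t1 \<in> Gam n1 n2 n3 t \<and> t2 \<in> Gam n1 n2 n3 t)"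

definition theta :: "nat \<Rightarrow> nat \<Rightarrow> nat \<Rightarrow> (cell \<Rightarrow> nat) \<Rightarrow> cell \<Rightarrow> nat set" where
  "theta n1 n2 n3 lam t = {l. l > 0 \<and> card {s \<in> Gam n1 n2 n3 t. lam s = l} = 1}"

definition active :: "nat \<Rightarrow> nat \<Rightarrow> nat \<Rightarrow> (cell \<Rightarrow> nat) \<Rightarrow> cell \<Rightarrow> bool" where
  "active n1 n2 n3 lam t \<longleftrightarrow> theta n1 n2 n3 lam t \<noteq> {}"

section \<open>Procedure LABEL (relational: any admissible numbering of the classes)\<close>

definition same_class :: "nat \<Rightarrow> nat \<Rightarrow> nat \<Rightarrow> (cell \<Rightarrow> nat) \<Rightarrow> cell set \<Rightarrow> cell \<Rightarrow> cell \<Rightarrow> bool" where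
  "same_class n1 n2 n3 lam A t t' \<longleftrightarrow>
     theta n1 n2 n3 lam t = theta n1 n2 n3 lam t' \<and>
     (\<lambda>a b. a \<in> A \<and> b \<in> A \<and> theta n1 n2 n3 lam a = theta n1 n2 n3 lam t
            \<and> theta n1 n2 n3 lam b = theta n1 n2 n3 lam t \<and> cconn n1 n2 n3 a b)\<^sup>*\<^sup>* t t'"

definition is_LABEL :: "nat \<Rightarrow> nat \<Rightarrow> nat \<Rightarrow> (cell \<Rightarrow> nat) \<Rightarrow> cell set \<Rightarrow> (cell \<Rightarrow> nat) \<Rightarrow> bool" where
  "is_LABEL n1 n2 n3 \<sigma> B lam \<longleftrightarrow>
     (\<forall>t\<in>B. cdim t = 3 \<longrightarrow> lam t = \<sigma> (voxel_of t)) \<and>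
     (\<forall>j\<in>{0,1,2::nat}.
        (\<forall>t\<in>B. cdim t = j \<and> \<not> active n1 n2 n3 lam t \<longrightarrow> lam t = 0) \<and>
        (let A = {t \<in> B. cdim t = j \<and> active n1 n2 n3 lam t} in
          (\<forall>t\<in>A. \<forall>t'\<in>A. lam t = lam t' \<longleftrightarrow> same_class n1 n2 n3 lam A t t') \<and>
          (\<exists>m. lam ` A = {1..m})))"

definition mcount :: "nat \<Rightarrow> (cell \<Rightarrow> nat) \<Rightarrow> cell set \<Rightarrow> nat" where
  "mcount j lam B = card (lam ` {t \<in> B. cdim t = j \<and> lam t > 0})"

definition axis_decomp :: "nat \<Rightarrow> (nat \<Rightarrow> nat) \<Rightarrow> nat \<Rightarrow> bool" where
  "axis_decomp N a m \<longleftrightarrow> m \<ge> 1 \<and> a 0 = 1 \<and> a m = 2*N - 1 \<and>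
     (\<forall>k<m. a k < a (Suc k)) \<and> (\<forall>k\<le>m. odd (a k))"

fun blk :: "(nat \<Rightarrow> nat) \<Rightarrow> (nat \<Rightarrow> nat) \<Rightarrow> (nat \<Rightarrow> nat) \<Rightarrow> nat \<times> nat \<times> nat \<Rightarrow> cell set" where
  "blk a1 a2 a3 (k1,k2,k3) =
     {a1 (k1-1)..a1 k1} \<times> {a2 (k2-1)..a2 k2} \<times> {a3 (k3-1)..a3 k3}"

definition bnd :: "nat \<Rightarrow> nat \<Rightarrow> nat \<Rightarrow> (cell \<Rightarrow> nat) \<Rightarrow> cell \<Rightarrow> nat set" where
  "bnd n1 n2 n3 lam s = {lam u | u. u \<in> Gam n1 n2 n3 s \<and> lam u > 0}"

definition merge_pairs :: "nat \<Rightarrow> nat \<Rightarrow> nat \<Rightarrow> cell \<Rightarrow> (cell \<Rightarrow> nat) \<Rightarrow> (nat \<times> nat) set" where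
  "merge_pairs n1 n2 n3 t0 lam =
     {(l, l'). l \<noteq> l' \<and> l \<in> theta n1 n2 n3 lam t0 \<and> l' \<in> theta n1 n2 n3 lam t0 \<and>
        (\<exists>s s'. s \<in> Gam n1 n2 n3 t0 \<and> s' \<in> Gam n1 n2 n3 t0 \<and> lam s = l \<and> lam s' = l' \<and>
                bnd n1 n2 n3 lam s = bnd n1 n2 n3 lam s')}"

definition step4 :: "nat \<Rightarrow> nat \<Rightarrow> nat \<Rightarrow> cell \<Rightarrow> (cell \<Rightarrow> nat) \<Rightarrow> (cell \<Rightarrow> nat) \<Rightarrow> bool" where
  "step4 n1 n2 n3 t0 lam lam' \<longleftrightarrow>
     (let P = merge_pairs n1 n2 n3 t0 lam in
      \<exists>f :: nat \<Rightarrow> nat.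
        (\<forall>l. (l, f l) \<in> (P \<union> P\<inverse>)\<^sup>*) \<and>
        (\<forall>l l'. (l, l') \<in> (P \<union> P\<inverse>)\<^sup>* \<longrightarrow> f l = f l') \<and>
        (\<forall>t. cdim t = 1 \<longrightarrow> lam' t = f (lam t)) \<and>
        (\<forall>t. cdim t \<noteq> 1 \<and> t \<noteq> t0 \<longrightarrow> lam' t = lam t) \<and>
        lam' t0 = (if P \<noteq> {} \<and> \<not> active n1 n2 n3 lam' t0 then 0 else lam t0))"

section \<open>Block-wise method (relational: any admissible choices)\<close>

definition blockwise_output ::
  "nat \<Rightarrow> nat \<Rightarrow> nat \<Rightarrow> (cell \<Rightarrow> nat) \<Rightarrow> (nat \<Rightarrow> nat) \<Rightarrow> nat \<Rightarrow> (nat \<Rightarrow> nat) \<Rightarrow> nat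
     \<Rightarrow> (nat \<Rightarrow> nat) \<Rightarrow> nat \<Rightarrow> (cell \<Rightarrow> nat) \<Rightarrow> bool" where
  "blockwise_output n1 n2 n3 \<sigma> a1 m1 a2 m2 a3 m3 \<tau>' \<longleftrightarrow>
    (\<exists>(K::nat) (bo :: nat \<Rightarrow> nat \<times> nat \<times> nat) (lam :: nat \<Rightarrow> cell \<Rightarrow> nat)
       (rep :: nat \<Rightarrow> nat \<Rightarrow> nat) (\<tau>0 :: cell \<Rightarrow> nat)
       (N::nat) (e :: nat \<Rightarrow> cell) (st :: nat \<Rightarrow> cell \<Rightarrow> nat).
     let Bk = (\<lambda>k. blk a1 a2 a3 (bo k));
         off = (\<lambda>k t. lam k t + (\<Sum>k'<k. mcount (cdim t) (lam k') (Bk k')));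
         E = (\<lambda>j. {(off k t, off k' t) | k k' t. k < K \<and> k' < K \<and> t \<in> Bk k \<and> t \<in> Bk k'
                     \<and> cdim t = j \<and> lam k t > 0 \<and> lam k' t > 0});
         R = (\<lambda>j l. if j = 0 then l else rep j l)
     in
       \<comment> \<open>block ordering\<close>
       bij_betw bo {..<K} ({1..m1} \<times> {1..m2} \<times> {1..m3}) \<and>
       \<comment> \<open>Step 1\<close>
       (\<forall>k<K. is_LABEL n1 n2 n3 \<sigma> (Bk k) (lam k)) \<and>
       \<comment> \<open>Step 3: union-find for j = 1,2 with arbitrary representatives\<close>
       (\<forall>j\<in>{1,2::nat}. (\<forall>l. (l, rep j l) \<in> (E j)\<^sup>*) \<and>
                         (\<forall>l l'. (l, l') \<in> (E j)\<^sup>* \<longrightarrow> rep j l = rep j l')) \<and>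
       \<comment> \<open>labels after Steps 1--3\<close>
       (\<forall>t\<in>tgrid n1 n2 n3. cdim t = 3 \<longrightarrow> \<tau>0 t = \<sigma> (voxel_of t)) \<and>
       (\<forall>t\<in>tgrid n1 n2 n3. cdim t < 3 \<longrightarrow>
          (if (\<exists>k<K. t \<in> Bk k \<and> lam k t > 0)
           then (\<exists>k<K. t \<in> Bk k \<and> lam k t > 0 \<and> \<tau>0 t = R (cdim t) (off k t))
           else \<tau>0 t = 0)) \<and>
       \<comment> \<open>Step 4: process the 0-cells of T in some order\<close>
       bij_betw e {..<N} {t \<in> tgrid n1 n2 n3. cdim t = 0} \<and>
       st 0 = \<tau>0 \<and>
       (\<forall>i<N. step4 n1 n2 n3 (e i) (st i) (st (Suc i))) \<and>
       (\<forall>t\<in>tgrid n1 n2 n3. \<tau>' t = st N t))"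

end

theory Submission
  imports Defs
begin

text \<open>Whether a 1-cell t is active depends only on which of the 2-cells in \<Gamma>(t) carry equal
  labels and which carry label 0; for 2-cells adjacent to a common 1-cell, LABEL makes both
  determined by their \<theta>-sets, which in turn depend only on the voxel labels. A block with odd
  corners contains \<Gamma>(t) and \<Gamma>(\<Gamma>(t)) together with t, so each block containing t decides the
  activity of t exactly as the global labelling does. The offsets of Step 2, the union-find
  of Step 3 and the merges of Step 4 only ever identify positive labels with positive
  labels, so they never change whether a 1-cell label is 0.\<close>

lemma rtrancl_zero_iff_of_positive:
  assumes "(x, y) \<in> R\<^sup>*" and "\<forall>(a, b)\<in>R. 0 < a \<and> 0 < (b::nat)"
  shows "x = 0 \<longleftrightarrow> y = 0"
  using assms by (induction rule: rtrancl_induct) auto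

lemma step4_zero_iff:
  assumes "step4 n1 n2 n3 t0 lam lam'" and "cdim t = 1"
  shows "lam' t = 0 \<longleftrightarrow> lam t = 0"
proof -
  let ?P = "merge_pairs n1 n2 n3 t0 lam"
  obtain f where f: "\<forall>l. (l, f l) \<in> (?P \<union> ?P\<inverse>)\<^sup>*" "\<forall>t. cdim t = 1 \<longrightarrow> lam' t = f (lam t)"
    using assms(1) unfolding step4_def Let_def by blast
  have "\<forall>(a, b)\<in>?P \<union> ?P\<inverse>. 0 < a \<and> 0 < b"
    unfolding merge_pairs_def theta_def by auto
  then show ?thesis
    using rtrancl_zero_iff_of_positive f assms(2) by metis
qed

lemma step4_chain_zero_iff:
  assumes "\<forall>i<N. step4 n1 n2 n3 (e i) (st i) (st (Suc i))" and "cdim t = 1"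
  shows "st N t = 0 \<longleftrightarrow> st 0 t = 0"
  using assms(1)
proof (induction N)
  case (Suc N)
  then show ?case using step4_zero_iff[OF Suc.prems[rule_format, OF lessI] assms(2)] by simp
qed simp

lemma theta_cong:
  assumes "\<forall>u\<in>Gam n1 n2 n3 t. lam u = mu u"
  shows "theta n1 n2 n3 lam t = theta n1 n2 n3 mu t"
proof -
  have "{s \<in> Gam n1 n2 n3 t. lam s = l} = {s \<in> Gam n1 n2 n3 t. mu s = l}" for l
    using assms by auto
  then show ?thesis unfolding theta_def by simp
qed

lemma active_iff_of_same_pattern:
  assumes "\<forall>s\<in>Gam n1 n2 n3 t. \<forall>s'\<in>Gam n1 n2 n3 t. lam s = lam s' \<longleftrightarrow> mu s = mu s'"
    and "\<forall>s\<in>Gam n1 n2 n3 t. 0 < lam s \<longleftrightarrow> 0 < mu s"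
  shows "active n1 n2 n3 lam t \<longleftrightarrow> active n1 n2 n3 mu t"
proof -
  have transfer: "active n1 n2 n3 mu t"
    if eq: "\<forall>s\<in>Gam n1 n2 n3 t. \<forall>s'\<in>Gam n1 n2 n3 t. lam s = lam s' \<longleftrightarrow> mu s = mu s'"
      and pos: "\<forall>s\<in>Gam n1 n2 n3 t. 0 < lam s \<longleftrightarrow> 0 < mu s"
      and act: "active n1 n2 n3 lam t" for lam mu
  proof -
    obtain l where l: "l > 0" "card {s \<in> Gam n1 n2 n3 t. lam s = l} = 1"
      using act unfolding active_def theta_def by auto
    then obtain s0 where s0: "{s \<in> Gam n1 n2 n3 t. lam s = l} = {s0}"
      using card_1_singletonE by blast
    then have "s0 \<in> Gam n1 n2 n3 t" "lam s0 = l" by auto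
    moreover have "{s \<in> Gam n1 n2 n3 t. mu s = mu s0} = {s \<in> Gam n1 n2 n3 t. lam s = lam s0}"
      using eq calculation(1) by auto
    ultimately have "mu s0 \<in> theta n1 n2 n3 mu t"
      using s0 pos l(1) unfolding theta_def by auto
    then show ?thesis unfolding active_def by auto
  qed
  show ?thesis using transfer[OF assms] transfer[of mu lam] assms by auto
qed

lemma LABEL_pos_iff_active:
  assumes "is_LABEL n1 n2 n3 \<sigma> B lam" and "t \<in> B" and "cdim t \<in> {0, 1, 2}"
  shows "0 < lam t \<longleftrightarrow> active n1 n2 n3 lam t"
proof -
  have "\<not> active n1 n2 n3 lam t \<longrightarrow> lam t = 0"
    using assms unfolding is_LABEL_def by blast
  moreover obtain m where "lam ` {u \<in> B. cdim u = cdim t \<and> active n1 n2 n3 lam u} = {1..m}"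
    using assms unfolding is_LABEL_def Let_def by blast
  then have "active n1 n2 n3 lam t \<longrightarrow> lam t \<in> {1..m}"
    using assms(2) by blast
  ultimately show ?thesis by force
qed

lemma LABEL_eq_iff_theta_eq:
  assumes "is_LABEL n1 n2 n3 \<sigma> B lam" and "j \<in> {0, 1, 2}"
    and "s \<in> B" "s' \<in> B" "cdim s = j" "cdim s' = j"
    and "active n1 n2 n3 lam s" "active n1 n2 n3 lam s'" "cconn n1 n2 n3 s s'"
  shows "lam s = lam s' \<longleftrightarrow> theta n1 n2 n3 lam s = theta n1 n2 n3 lam s'"
proof -
  let ?A = "{u \<in> B. cdim u = j \<and> active n1 n2 n3 lam u}"
  have "\<forall>t\<in>?A. \<forall>t'\<in>?A. lam t = lam t' \<longleftrightarrow> same_class n1 n2 n3 lam ?A t t'"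
    using assms(1,2) unfolding is_LABEL_def Let_def by auto
  then have "lam s = lam s' \<longleftrightarrow> same_class n1 n2 n3 lam ?A s s'"
    using assms(3-8) by blast
  also have "\<dots> \<longleftrightarrow> theta n1 n2 n3 lam s = theta n1 n2 n3 lam s'"
    unfolding same_class_def using assms(3-9) by (auto intro!: r_into_rtranclp)
  finally show ?thesis .
qed

lemma LABEL_1cell_pos_iff:
  assumes L: "is_LABEL n1 n2 n3 \<sigma> B lam" and M: "is_LABEL n1 n2 n3 \<sigma> B' mu"
    and closed: "\<forall>u\<in>B. Gam n1 n2 n3 u \<subseteq> B" "\<forall>u\<in>B'. Gam n1 n2 n3 u \<subseteq> B'"
    and t: "t \<in> B" "t \<in> B'" "t \<in> tgrid n1 n2 n3" "cdim t = 1"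
  shows "0 < lam t \<longleftrightarrow> 0 < mu t"
proof -
  let ?G = "Gam n1 n2 n3 t"
  have G: "s \<in> B" "s \<in> B'" "cdim s = 2" if "s \<in> ?G" for s
  proof -
    show "s \<in> B" "s \<in> B'" using that closed t(1,2) by blast+
    show "cdim s = 2" using that t(4) unfolding Gam_def by simp
  qed
  have theta_eq: "theta n1 n2 n3 lam s = theta n1 n2 n3 mu s" if s: "s \<in> ?G" for s
  proof (rule theta_cong, rule ballI)
    fix u assume u: "u \<in> Gam n1 n2 n3 s"
    then have "u \<in> B" "u \<in> B'" using G[OF s] closed by blast+
    moreover have "cdim u = 3" using u G[OF s] unfolding Gam_def by simp
    ultimately show "lam u = mu u" using L M unfolding is_LABEL_def by auto
  qed
  then have act: "active n1 n2 n3 lam s \<longleftrightarrow> active n1 n2 n3 mu s" if "s \<in> ?G" for s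
    using that unfolding active_def by simp
  have pos: "0 < lam s \<longleftrightarrow> 0 < mu s" if s: "s \<in> ?G" for s
    using LABEL_pos_iff_active[OF L] LABEL_pos_iff_active[OF M] G[OF s] act[OF s] by simp
  have eq: "lam s = lam s' \<longleftrightarrow> mu s = mu s'" if s: "s \<in> ?G" "s' \<in> ?G" for s s'
  proof (cases "active n1 n2 n3 lam s \<and> active n1 n2 n3 lam s'")
    case True
    have "cconn n1 n2 n3 s s'" unfolding cconn_def using s t(3) by blast
    then show ?thesis
      using LABEL_eq_iff_theta_eq[OF L, of 2 s s'] LABEL_eq_iff_theta_eq[OF M, of 2 s s']
        True act s G theta_eq by simp
  next
    case False
    then have "lam s = 0 \<or> lam s' = 0"
      using LABEL_pos_iff_active[OF L G(1)[OF s(1)]] LABEL_pos_iff_active[OF L G(1)[OF s(2)]]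
        G(3)[OF s(1)] G(3)[OF s(2)] by auto
    then show ?thesis using pos[OF s(1)] pos[OF s(2)] by auto
  qed
  have "active n1 n2 n3 lam t \<longleftrightarrow> active n1 n2 n3 mu t"
    using active_iff_of_same_pattern eq pos by blast
  then show ?thesis
    using LABEL_pos_iff_active[OF L t(1)] LABEL_pos_iff_active[OF M t(2)] t(4) by simp
qed

lemma Gam_subset_odd_box:
  assumes "t \<in> {a1..b1} \<times> {a2..b2} \<times> {a3..b3}" and "s \<in> Gam n1 n2 n3 t"
    and "odd a1" "odd b1" "odd a2" "odd b2" "odd a3" "odd b3"
  shows "s \<in> {a1..b1} \<times> {a2..b2} \<times> {a3..b3}"
proof -
  obtain x y z x' y' z' where ts: "t = (x, y, z)" "s = (x', y', z')" by (cases t, cases s) auto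
  have "nbr6 t s" "cdim s = cdim t + 1" using assms(2) unfolding Gam_def by auto
  \<comment> \<open>the coordinate that moves goes from even to odd, so it cannot leave an odd-cornered box\<close>
  then show ?thesis using assms(1,3-8) unfolding ts
    by (auto split: if_splits) presburger+
qed

lemma tgrid_closed_Gam: "\<forall>u\<in>tgrid n1 n2 n3. Gam n1 n2 n3 u \<subseteq> tgrid n1 n2 n3"
  unfolding Gam_def by auto

lemma axis_decomp_cover:
  assumes "axis_decomp N a m" and "a 0 \<le> x" "x \<le> a m"
  shows "\<exists>k\<in>{1..m}. a (k - 1) \<le> x \<and> x \<le> a k"
proof -
  have "1 \<le> m" using assms(1) unfolding axis_decomp_def by simp
  then show ?thesis using assms(3)
  proof (induction m rule: dec_induct)
    case base then show ?case using assms(2) by auto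
  next
    case (step m)
    then show ?case by (cases "x \<le> a m") (auto intro: bexI[of _ "Suc m"])
  qed
qed

lemma blocks_cover_tgrid:
  assumes "axis_decomp n1 a1 m1" "axis_decomp n2 a2 m2" "axis_decomp n3 a3 m3"
    and "t \<in> tgrid n1 n2 n3"
  shows "\<exists>k\<in>{1..m1} \<times> {1..m2} \<times> {1..m3}. t \<in> blk a1 a2 a3 k"
proof -
  obtain x y z where t: "t = (x, y, z)" by (cases t) auto
  have "a1 0 \<le> x" "x \<le> a1 m1" "a2 0 \<le> y" "y \<le> a2 m2" "a3 0 \<le> z" "z \<le> a3 m3"
    using assms unfolding t tgrid_def axis_decomp_def by auto
  then show ?thesis
    using axis_decomp_cover[OF assms(1)] axis_decomp_cover[OF assms(2)]
      axis_decomp_cover[OF assms(3)] unfolding t by fastforce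
qed

lemma blk_closed_Gam:
  assumes "axis_decomp n1 a1 m1" "axis_decomp n2 a2 m2" "axis_decomp n3 a3 m3"
    and "k \<in> {1..m1} \<times> {1..m2} \<times> {1..m3}"
  shows "\<forall>u\<in>blk a1 a2 a3 k. Gam n1 n2 n3 u \<subseteq> blk a1 a2 a3 k"
proof -
  obtain k1 k2 k3 where k: "k = (k1, k2, k3)" by (cases k) auto
  have "odd (a1 (k1 - 1))" "odd (a1 k1)" "odd (a2 (k2 - 1))" "odd (a2 k2)"
    "odd (a3 (k3 - 1))" "odd (a3 k3)"
    using assms unfolding k axis_decomp_def by auto
  then show ?thesis unfolding k blk.simps using Gam_subset_odd_box by blast
qed

lemma block_LABEL_1cell_pos_iff:
  assumes "axis_decomp n1 a1 m1" "axis_decomp n2 a2 m2" "axis_decomp n3 a3 m3"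
    and "k \<in> {1..m1} \<times> {1..m2} \<times> {1..m3}"
    and "is_LABEL n1 n2 n3 \<sigma> (blk a1 a2 a3 k) lam" "is_LABEL n1 n2 n3 \<sigma> (tgrid n1 n2 n3) \<tau>"
    and "t \<in> blk a1 a2 a3 k" "t \<in> tgrid n1 n2 n3" "cdim t = 1"
  shows "0 < lam t \<longleftrightarrow> 0 < \<tau> t"
  using LABEL_1cell_pos_iff[OF assms(5,6) blk_closed_Gam[OF assms(1-4)] tgrid_closed_Gam
      assms(7,8,8,9)] .

lemma blockwise_outputE:
  assumes "blockwise_output n1 n2 n3 \<sigma> a1 m1 a2 m2 a3 m3 \<tau>'"
  obtains K N :: nat and bo lam \<tau>0 e st where
    "bij_betw bo {..<K} ({1..m1} \<times> {1..m2} \<times> {1..m3})"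
    "\<forall>k<K. is_LABEL n1 n2 n3 \<sigma> (blk a1 a2 a3 (bo k)) (lam k)"
    "\<forall>t\<in>tgrid n1 n2 n3. cdim t = 1 \<longrightarrow>
       (\<tau>0 t = 0 \<longleftrightarrow> \<not> (\<exists>k<K. t \<in> blk a1 a2 a3 (bo k) \<and> 0 < lam k t))"
    "st 0 = \<tau>0" "\<forall>i<N. step4 n1 n2 n3 (e i) (st i) (st (Suc i))"
    "\<forall>t\<in>tgrid n1 n2 n3. \<tau>' t = st N t"
  using assms unfolding blockwise_output_def Let_def
proof (elim exE conjE, goal_cases)
  case (1 K bo lam rep \<tau>0 N e st)
  note union_find = 1(4) and low_dim_labels = 1(6)
  have rep_pos: "0 < rep 1 l" if "0 < l" for l
  proof -
    have "l = 0 \<longleftrightarrow> rep 1 l = 0"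
      by (rule rtrancl_zero_iff_of_positive
          [OF union_find[rule_format, OF insertI1, THEN conjunct1, THEN spec]]) auto
    then show ?thesis using that by simp
  qed
  have "\<tau>0 t = 0 \<longleftrightarrow> \<not> (\<exists>k<K. t \<in> blk a1 a2 a3 (bo k) \<and> 0 < lam k t)"
    if t: "t \<in> tgrid n1 n2 n3" "cdim t = 1" for t
  proof (cases "\<exists>k<K. t \<in> blk a1 a2 a3 (bo k) \<and> 0 < lam k t")
    case True
    then obtain k where "0 < lam k t"
      and "\<tau>0 t = rep 1 (lam k t + (\<Sum>k'<k. mcount 1 (lam k') (blk a1 a2 a3 (bo k'))))"
      using low_dim_labels[rule_format, OF t(1)] t(2) by auto
    then show ?thesis using True rep_pos[OF add_pos_nonneg] by simp
  next
    case False
    then show ?thesis using low_dim_labels[rule_format, OF t(1)] t(2) by simp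
  qed
  then show ?case using 1(1)[OF 1(2,3) _ 1(8-10)] by blast
qed

theorem proposition4:
  fixes n1 n2 n3 :: nat and \<sigma> :: "cell \<Rightarrow> nat"
    and a1 a2 a3 :: "nat \<Rightarrow> nat" and m1 m2 m3 :: nat
    and \<tau> \<tau>' :: "cell \<Rightarrow> nat" and t1 :: cell
  assumes "n1 \<ge> 1" and "n2 \<ge> 1" and "n3 \<ge> 1"
    and "segment_map n1 n2 n3 \<sigma>"
    and "axis_decomp n1 a1 m1" and "axis_decomp n2 a2 m2" and "axis_decomp n3 a3 m3"
    and "is_LABEL n1 n2 n3 \<sigma> (tgrid n1 n2 n3) \<tau>"
    and "blockwise_output n1 n2 n3 \<sigma> a1 m1 a2 m2 a3 m3 \<tau>'"
    and "t1 \<in> tgrid n1 n2 n3" and "cdim t1 = 1"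
  shows "\<tau> t1 = 0 \<longleftrightarrow> \<tau>' t1 = 0"
proof -
  obtain K N :: nat and bo lam \<tau>0 e st where
    bo: "bij_betw bo {..<K} ({1..m1} \<times> {1..m2} \<times> {1..m3})"
    and lab: "\<forall>k<K. is_LABEL n1 n2 n3 \<sigma> (blk a1 a2 a3 (bo k)) (lam k)"
    and \<tau>0: "\<forall>t\<in>tgrid n1 n2 n3. cdim t = 1 \<longrightarrow>
       (\<tau>0 t = 0 \<longleftrightarrow> \<not> (\<exists>k<K. t \<in> blk a1 a2 a3 (bo k) \<and> 0 < lam k t))"
    and steps: "st 0 = \<tau>0" "\<forall>i<N. step4 n1 n2 n3 (e i) (st i) (st (Suc i))"
    and \<tau>': "\<forall>t\<in>tgrid n1 n2 n3. \<tau>' t = st N t"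
    by (rule blockwise_outputE[OF assms(9)])
  have block_agrees: "0 < lam k t1 \<longleftrightarrow> 0 < \<tau> t1" if "k < K" "t1 \<in> blk a1 a2 a3 (bo k)" for k
    using block_LABEL_1cell_pos_iff[OF assms(5-7) bij_betw_apply[OF bo] lab[rule_format, OF that(1)]
        assms(8) that(2) assms(10,11)] that(1) by simp
  obtain k where k: "k \<in> {1..m1} \<times> {1..m2} \<times> {1..m3}" "t1 \<in> blk a1 a2 a3 k"
    using blocks_cover_tgrid[OF assms(5-7,10)] by blast
  have "k \<in> bo ` {..<K}" using bij_betw_imp_surj_on[OF bo] k(1) by simp
  then obtain k0 where k0: "k0 < K" "k = bo k0" by auto
  have "\<tau>' t1 = 0 \<longleftrightarrow> \<tau>0 t1 = 0"
    using step4_chain_zero_iff[OF steps(2) assms(11)] steps(1) \<tau>' assms(10) by simp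
  also have "\<dots> \<longleftrightarrow> \<not> (\<exists>k<K. t1 \<in> blk a1 a2 a3 (bo k) \<and> 0 < lam k t1)"
    by (rule \<tau>0[rule_format, OF assms(10,11)])
  also have "(\<exists>k<K. t1 \<in> blk a1 a2 a3 (bo k) \<and> 0 < lam k t1) \<longleftrightarrow> 0 < \<tau> t1"
    using k0 k(2) block_agrees by auto
  finally show ?thesis by simp
qed

end
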